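(* In the setting described in the context (assuming (F1) and (F2)), for every $t\in\mathbb N\cup\{0\}$, $$\|z(t)-1_n\otimes\bar w(t)\|_{\pi\otimes1_d}\le\delta\|w(t)-n\pi\otimes\bar w(t)\|_{\pi\otimes1_d}+\delta\|1_n-n\pi\|_\pi\sigma_W^t\big(\|\bar w(t)-w_*\|+\|w_*\|\big).$$
   Context: $G=(V,E)$ directed on $\{1,\dots,n\}$, self-loop at each vertex, strongly connected; $d_j=|\{i:(j,i)\in E\}|$, $W_{ij}=1/d_j$ if $(j,i)\in E$, else $0$. $\pi$: $W\pi=\pi$, $\pi_i>0$, $\sum\pi_i=1$; $W^\infty=\pi1_n^\top$. $\|x\|_\pi=(\sum_ix_i^2/\pi_i)^{1/2}$ on $\mathbb R^n$, $|||\cdot|||_\pi$ the induced operator norm, $\sigma_W=|||W-W^\infty|||_\pi$ (known $<1$). On $\mathbb R^{nd}$, $\|x\|_{\pi\otimes1_d}=(\sum_i\|x_i\|^2/\pi_i)^{1/2}$. $v\otimes u=\mathrm{col}(v_1u,\dots,v_nu)$. $f_i:\mathbb R^d\to\mathbb R$, $f=\frac1n\sum f_i$; (F1) each $\nabla f_i$ is $L_i$-Lipschitz, $L=\max L_i$; (F2) $f$ is $\beta$-strongly convex; $w_*$ is the minimizer of $f$. $\nabla F(x)=\mathrm{col}(\nabla f_i(x_i))$. Algorithm with stepsize $\alpha>0$: given $w(0)\in\mathbb R^{nd}$, $y(0)=1_n$; for $t\ge0$: $z_i(t)=w_i(t)/y_i(t)$, $x_i(t)=w_i(t)-\alpha\nabla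 f_i(z_i(t))$, $w_i(t+1)=\sum_jW_{ij}x_j(t)$, $y_i(t+1)=\sum_jW_{ij}y_j(t)$. $z(t)=\mathrm{col}(z_i(t))$, $\bar w(t)=\frac1n\sum_iw_i(t)$, $\delta=\sup_{t\ge0}\max_i1/y_i(t)$. *)

theory Defs
  imports "HOL-Analysis.Analysis"
begin

text \<open>Vertices are the elements of a finite type 'n (playing the role of 1..n, n = CARD('n)).
  Vectors in R^n are functions 'n => real, n x n matrices are functions 'n => 'n => real.\<close>

definition out_deg :: "('n \<times> 'n) set \<Rightarrow> 'n \<Rightarrow> nat" where
  "out_deg E j = card {i. (j, i) \<in> E}"

definition Wmat :: "('n \<times> 'n) set \<Rightarrow> 'n \<Rightarrow> 'n \<Rightarrow> real" where
  "Wmat E i j = (if (j, i) \<in> E then 1 / real (out_deg E j) else 0)"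

definition mat_vec :: "('n::finite \<Rightarrow> 'n \<Rightarrow> real) \<Rightarrow> ('n \<Rightarrow> real) \<Rightarrow> 'n \<Rightarrow> real" where
  "mat_vec A x = (\<lambda>i. \<Sum>j\<in>UNIV. A i j * x j)"

definition Winf :: "('n \<Rightarrow> real) \<Rightarrow> 'n \<Rightarrow> 'n \<Rightarrow> real" where
  "Winf p i j = p i"

definition pi_norm :: "('n::finite \<Rightarrow> real) \<Rightarrow> ('n \<Rightarrow> real) \<Rightarrow> real" where
  "pi_norm p x = sqrt (\<Sum>i\<in>UNIV. (x i)\<^sup>2 / p i)"

definition pi_opnorm :: "('n::finite \<Rightarrow> real) \<Rightarrow> ('n \<Rightarrow> 'n \<Rightarrow> real) \<Rightarrow> real" where
  "pi_opnorm p A = Sup {pi_norm p (mat_vec A x) | x. pi_norm p x \<le> 1}"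

definition sigmaW :: "('n::finite \<times> 'n) set \<Rightarrow> ('n \<Rightarrow> real) \<Rightarrow> real" where
  "sigmaW E p = pi_opnorm p (\<lambda>i j. Wmat E i j - Winf p i j)"

definition pi_block_norm :: "('n::finite \<Rightarrow> real) \<Rightarrow> ('n \<Rightarrow> real^'d) \<Rightarrow> real" where
  "pi_block_norm p x = sqrt (\<Sum>i\<in>UNIV. (norm (x i))\<^sup>2 / p i)"

definition kron :: "('n \<Rightarrow> real) \<Rightarrow> real^'d \<Rightarrow> 'n \<Rightarrow> real^'d" where
  "kron v u = (\<lambda>i. v i *\<^sub>R u)"

definition strongly_convex :: "real \<Rightarrow> (real^'d \<Rightarrow> real) \<Rightarrow> bool" where
  "strongly_convex \<beta> g \<longleftrightarrow> (\<forall>x y t. 0 \<le> t \<and> t \<le> 1 \<longrightarrow>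
      g (t *\<^sub>R x + (1 - t) *\<^sub>R y) \<le> t * g x + (1 - t) * g y - \<beta> / 2 * t * (1 - t) * (norm (x - y))\<^sup>2)"

primrec yseq :: "('n::finite \<Rightarrow> 'n \<Rightarrow> real) \<Rightarrow> nat \<Rightarrow> 'n \<Rightarrow> real" where
  "yseq W 0 = (\<lambda>_. 1)"
| "yseq W (Suc t) = (\<lambda>i. \<Sum>j\<in>UNIV. W i j * yseq W t j)"

primrec wseq :: "('n::finite \<Rightarrow> 'n \<Rightarrow> real) \<Rightarrow> ('n \<Rightarrow> real^'d \<Rightarrow> real^'d) \<Rightarrow> real
                 \<Rightarrow> ('n \<Rightarrow> real^'d) \<Rightarrow> nat \<Rightarrow> 'n \<Rightarrow> real^'d" where
  "wseq W gF \<alpha> w0 0 = w0"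
| "wseq W gF \<alpha> w0 (Suc t) = (\<lambda>i. \<Sum>j\<in>UNIV. W i j *\<^sub>R
      (wseq W gF \<alpha> w0 t j - \<alpha> *\<^sub>R gF j ((1 / yseq W t j) *\<^sub>R wseq W gF \<alpha> w0 t j)))"

definition zseq :: "('n::finite \<Rightarrow> 'n \<Rightarrow> real) \<Rightarrow> ('n \<Rightarrow> real^'d \<Rightarrow> real^'d) \<Rightarrow> real
                 \<Rightarrow> ('n \<Rightarrow> real^'d) \<Rightarrow> nat \<Rightarrow> 'n \<Rightarrow> real^'d" where
  "zseq W gF \<alpha> w0 t = (\<lambda>i. (1 / yseq W t i) *\<^sub>R wseq W gF \<alpha> w0 t i)"

definition wbar :: "('n::finite \<Rightarrow> 'n \<Rightarrow> real) \<Rightarrow> ('n \<Rightarrow> real^'d \<Rightarrow> real^'d) \<Rightarrow> real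
                 \<Rightarrow> ('n \<Rightarrow> real^'d) \<Rightarrow> nat \<Rightarrow> real^'d" where
  "wbar W gF \<alpha> w0 t = (1 / real CARD('n)) *\<^sub>R (\<Sum>i\<in>UNIV. wseq W gF \<alpha> w0 t i)"

definition delta :: "('n::finite \<Rightarrow> 'n \<Rightarrow> real) \<Rightarrow> real" where
  "delta W = (SUP t. Max ((\<lambda>i. 1 / yseq W t i) ` UNIV))"

end

theory Submission
  imports Defs
begin

text \<open>
  With z i = w i / y i one has
  z i - wbar = ((w i - n p i wbar) + (n p i - y i) wbar) / y i, and since
  y(t) \<ge> \<pi> entrywise the supremum \<delta> of the 1 / y i is finite and bounds each
  of them.  As W is column stochastic and W \<pi> = \<pi>, the weights satisfy
  y(t+1) - n \<pi> = (W - W^\<infinity>)(y(t) - n \<pi>), so the \<pi>-norm of y(t) - n \<pi> is at most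
  sigma_W^t times that of 1 - n \<pi>; finally norm wbar \<le> norm (wbar - w_*) + norm w_*.
\<close>

lemma pi_norm_eq_L2_set:
  assumes "\<forall>i. p i > 0"
  shows "pi_norm p x = L2_set (\<lambda>i. \<bar>x i\<bar> / sqrt (p i)) UNIV"
  unfolding pi_norm_def L2_set_def
  using assms by (intro arg_cong[where f=sqrt] sum.cong) (auto simp: power_divide less_imp_le)

lemma pi_block_norm_eq_L2_set:
  assumes "\<forall>i. p i > 0"
  shows "pi_block_norm p x = L2_set (\<lambda>i. norm (x i) / sqrt (p i)) UNIV"
  unfolding pi_block_norm_def L2_set_def
  using assms by (intro arg_cong[where f=sqrt] sum.cong) (auto simp: power_divide less_imp_le)

lemma pi_norm_nonneg: "\<forall>i. p i > 0 \<Longrightarrow> pi_norm p x \<ge> 0"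
  by (simp add: pi_norm_eq_L2_set)

lemma pi_norm_zero: "pi_norm p (\<lambda>i. 0) = 0"
  by (simp add: pi_norm_def)

lemma pi_norm_eq_0_iff:
  assumes "\<forall>i. p i > 0"
  shows "pi_norm p x = 0 \<longleftrightarrow> x = (\<lambda>i. 0)"
proof -
  have "p i \<noteq> 0" for i
    using assms by (simp add: less_imp_neq[symmetric])
  then show ?thesis
    by (simp add: pi_norm_eq_L2_set[OF assms] L2_set_eq_0_iff fun_eq_iff)
qed

lemma pi_norm_cmult: "\<forall>i. p i > 0 \<Longrightarrow> pi_norm p (\<lambda>i. c * x i) = \<bar>c\<bar> * pi_norm p x"
  by (simp add: pi_norm_eq_L2_set L2_set_right_distrib abs_mult mult.assoc)

lemma pi_norm_mono:
  assumes "\<forall>i. p i > 0" "\<And>i. \<bar>x i\<bar> \<le> \<bar>y i\<bar>"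
  shows "pi_norm p x \<le> pi_norm p y"
  unfolding pi_norm_eq_L2_set[OF assms(1)]
  using assms by (intro L2_set_mono divide_right_mono) (auto simp: less_imp_le)

lemma mat_vec_cmult: "mat_vec A (\<lambda>i. c * x i) = (\<lambda>i. c * mat_vec A x i)"
  unfolding mat_vec_def by (simp add: sum_distrib_left mult.left_commute)

lemma mat_vec_zero: "mat_vec A (\<lambda>i. 0) = (\<lambda>i. 0)"
  unfolding mat_vec_def by simp

lemma bdd_above_pi_opnorm_set:
  assumes p: "\<forall>i. p i > 0"
  shows "bdd_above {pi_norm p (mat_vec A x) | x. pi_norm p x \<le> 1}"
proof -
  define B where "B = (\<lambda>i. \<Sum>j\<in>UNIV. \<bar>A i j\<bar> * sqrt (p j))"
  have "pi_norm p (mat_vec A x) \<le> pi_norm p B" if x: "pi_norm p x \<le> 1" for x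
  proof (rule pi_norm_mono[OF p])
    have xj: "\<bar>x j\<bar> \<le> sqrt (p j)" for j
    proof -
      have "\<bar>x j\<bar> / sqrt (p j) \<le> 1"
        using member_le_L2_set[of UNIV j "\<lambda>i. \<bar>x i\<bar> / sqrt (p i)"] x
        by (simp add: pi_norm_eq_L2_set[OF p])
      then show ?thesis
        using p[rule_format, of j] by (simp add: divide_le_eq_1)
    qed
    fix i
    have "\<bar>mat_vec A x i\<bar> \<le> (\<Sum>j\<in>UNIV. \<bar>A i j\<bar> * \<bar>x j\<bar>)"
      unfolding mat_vec_def abs_mult[symmetric] by (rule sum_abs)
    also have "\<dots> \<le> B i"
      unfolding B_def by (rule sum_mono) (simp add: mult_left_mono xj)
    finally show "\<bar>mat_vec A x i\<bar> \<le> \<bar>B i\<bar>" by simp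
  qed
  then show ?thesis unfolding bdd_above_def by blast
qed

lemma pi_opnorm_nonneg:
  assumes p: "\<forall>i. p i > 0"
  shows "pi_opnorm p A \<ge> 0"
proof -
  have "0 \<in> {pi_norm p (mat_vec A x) | x. pi_norm p x \<le> 1}"
    unfolding mem_Collect_eq
    by (rule exI[of _ "\<lambda>i. 0"]) (simp add: mat_vec_zero pi_norm_zero)
  then show ?thesis
    unfolding pi_opnorm_def by (rule cSup_upper[OF _ bdd_above_pi_opnorm_set[OF p]])
qed

lemma pi_norm_mat_vec_le:
  assumes p: "\<forall>i. p i > 0"
  shows "pi_norm p (mat_vec A v) \<le> pi_opnorm p A * pi_norm p v"
proof (cases "pi_norm p v = 0")
  case True
  then show ?thesis using pi_norm_eq_0_iff[OF p] by (simp add: mat_vec_zero pi_norm_zero)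
next
  case False
  define c where "c = 1 / pi_norm p v"
  have c: "c > 0" using False pi_norm_nonneg[OF p, of v] by (simp add: c_def)
  have "pi_norm p (\<lambda>i. c * v i) = c * pi_norm p v"
    using c by (simp add: pi_norm_cmult[OF p])
  also have "\<dots> = 1"
    using False by (simp add: c_def)
  finally have "pi_norm p (\<lambda>i. c * v i) = 1" .
  then have "pi_norm p (mat_vec A (\<lambda>i. c * v i))
      \<in> {pi_norm p (mat_vec A x) | x. pi_norm p x \<le> 1}"
    unfolding mem_Collect_eq by (intro exI[of _ "\<lambda>i. c * v i"]) simp
  then have "pi_norm p (mat_vec A (\<lambda>i. c * v i)) \<le> pi_opnorm p A"
    unfolding pi_opnorm_def by (rule cSup_upper[OF _ bdd_above_pi_opnorm_set[OF p]])
  then have "c * pi_norm p (mat_vec A v) \<le> pi_opnorm p A"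
    using c by (simp add: mat_vec_cmult pi_norm_cmult[OF p])
  then show ?thesis
    using c False pi_norm_nonneg[OF p, of v] by (simp add: c_def divide_le_eq mult.commute)
qed

lemma Wmat_nonneg: "Wmat E i j \<ge> 0"
  by (simp add: Wmat_def)

lemma sum_Wmat_column:
  fixes E :: "('n::finite \<times> 'n) set"
  assumes "(j, j) \<in> E"
  shows "(\<Sum>i\<in>UNIV. Wmat E i j) = 1"
proof -
  have "out_deg E j > 0"
    using assms by (auto simp: out_deg_def card_gt_0_iff)
  then show ?thesis
    using assms by (simp add: Wmat_def sum.If_cases out_deg_def) blast
qed

lemma yseq_ge_stationary:
  assumes "\<forall>i j. W i j \<ge> 0" and "mat_vec W p = p" and "\<forall>i. p i \<le> 1"
  shows "yseq W t i \<ge> p i"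
proof (induction t arbitrary: i)
  case 0
  then show ?case using assms(3) by simp
next
  case (Suc t)
  have "p i = (\<Sum>j\<in>UNIV. W i j * p j)"
    using assms(2) unfolding mat_vec_def by metis
  also have "\<dots> \<le> (\<Sum>j\<in>UNIV. W i j * yseq W t j)"
    by (rule sum_mono) (simp add: Suc assms(1) mult_left_mono)
  finally show ?case by simp
qed

lemma sum_yseq:
  fixes W :: "'n::finite \<Rightarrow> 'n \<Rightarrow> real"
  assumes "\<forall>j. (\<Sum>i\<in>UNIV. W i j) = 1"
  shows "(\<Sum>i\<in>UNIV. yseq W t i) = real CARD('n)"
proof (induction t)
  case (Suc t)
  have "(\<Sum>i\<in>UNIV. yseq W (Suc t) i) = (\<Sum>j\<in>UNIV. (\<Sum>i\<in>UNIV. W i j) * yseq W t j)"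
    by (simp add: sum_distrib_right) (rule sum.swap)
  then show ?case using assms Suc by simp
qed simp

lemma yseq_Suc_minus_stationary:
  fixes W :: "'n::finite \<Rightarrow> 'n \<Rightarrow> real"
  assumes "\<forall>j. (\<Sum>i\<in>UNIV. W i j) = 1" and "mat_vec W p = p" and "(\<Sum>i\<in>UNIV. p i) = 1"
  shows "(\<lambda>i. yseq W (Suc t) i - real CARD('n) * p i)
       = mat_vec (\<lambda>i j. W i j - Winf p i j) (\<lambda>i. yseq W t i - real CARD('n) * p i)"
proof
  fix i
  let ?n = "real CARD('n)"
  have Wp: "(\<Sum>j\<in>UNIV. W i j * p j) = p i"
    using assms(2) unfolding mat_vec_def by metis
  have "mat_vec (\<lambda>i j. W i j - Winf p i j) (\<lambda>i. yseq W t i - ?n * p i) i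
      = (\<Sum>j\<in>UNIV. W i j * yseq W t j - ?n * (W i j * p j) - p i * yseq W t j
          + ?n * p i * p j)"
    unfolding mat_vec_def Winf_def by (rule sum.cong) (simp_all add: algebra_simps)
  also have "\<dots> = (\<Sum>j\<in>UNIV. W i j * yseq W t j) - ?n * (\<Sum>j\<in>UNIV. W i j * p j)
        - p i * (\<Sum>j\<in>UNIV. yseq W t j) + ?n * p i * (\<Sum>j\<in>UNIV. p j)"
    by (simp only: sum.distrib sum_subtractf sum_distrib_left[symmetric])
  also have "\<dots> = yseq W (Suc t) i - ?n * p i"
    using Wp assms(3) sum_yseq[OF assms(1)] by simp
  finally show "yseq W (Suc t) i - ?n * p i
      = mat_vec (\<lambda>i j. W i j - Winf p i j) (\<lambda>i. yseq W t i - ?n * p i) i" ..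
qed

lemma pi_norm_yseq_minus_stationary_le:
  fixes W :: "'n::finite \<Rightarrow> 'n \<Rightarrow> real"
  assumes "\<forall>j. (\<Sum>i\<in>UNIV. W i j) = 1" and "mat_vec W p = p"
    and "(\<Sum>i\<in>UNIV. p i) = 1" and p: "\<forall>i. p i > 0"
  shows "pi_norm p (\<lambda>i. yseq W t i - real CARD('n) * p i)
      \<le> pi_opnorm p (\<lambda>i j. W i j - Winf p i j) ^ t * pi_norm p (\<lambda>i. 1 - real CARD('n) * p i)"
proof (induction t)
  case (Suc t)
  let ?\<sigma> = "pi_opnorm p (\<lambda>i j. W i j - Winf p i j)"
  have "pi_norm p (\<lambda>i. yseq W (Suc t) i - real CARD('n) * p i)
      \<le> ?\<sigma> * pi_norm p (\<lambda>i. yseq W t i - real CARD('n) * p i)"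
    unfolding yseq_Suc_minus_stationary[OF assms(1-3)] by (rule pi_norm_mat_vec_le[OF p])
  also have "\<dots> \<le> ?\<sigma> * (?\<sigma> ^ t * pi_norm p (\<lambda>i. 1 - real CARD('n) * p i))"
    using Suc pi_opnorm_nonneg[OF p] by (rule mult_left_mono)
  finally show ?case by simp
qed simp

lemma inverse_yseq_le_delta:
  assumes "\<forall>i j. W i j \<ge> 0" and "mat_vec W p = p" and p: "\<forall>i. p i > 0" "\<forall>i. p i \<le> 1"
  shows "1 / yseq W t i \<le> delta W"
proof -
  have inverse_le: "1 / yseq W s j \<le> (\<Sum>k\<in>UNIV. 1 / p k)" for s j
  proof -
    have "1 / yseq W s j \<le> 1 / p j"
      using yseq_ge_stationary[OF assms(1,2) p(2)] p by (simp add: frac_le)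
    also have "\<dots> \<le> (\<Sum>k\<in>UNIV. 1 / p k)"
      by (rule member_le_sum) (use p in \<open>auto simp: less_imp_le\<close>)
    finally show ?thesis .
  qed
  have "bdd_above (range (\<lambda>s. Max ((\<lambda>j. 1 / yseq W s j) ` UNIV)))"
    using inverse_le by (auto simp: bdd_above_def)
  then have "Max ((\<lambda>j. 1 / yseq W t j) ` UNIV) \<le> delta W"
    unfolding delta_def by (rule cSUP_upper[rotated]) simp
  then show ?thesis
    by (meson Max_ge UNIV_I finite finite_imageI image_eqI order_trans)
qed

lemma pi_block_norm_rescale_le:
  fixes w :: "'n::finite \<Rightarrow> real^'d"
  assumes p: "\<forall>i. p i > 0" and y: "\<And>i. y i > 0" "\<And>i. 1 / y i \<le> D"
  shows "pi_block_norm p (\<lambda>i. (1 / y i) *\<^sub>R w i - u)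
      \<le> D * pi_block_norm p (\<lambda>i. w i - kron q u i) + D * pi_norm p (\<lambda>i. y i - q i) * norm u"
proof -
  define a where "a = (\<lambda>i. w i - kron q u i)"
  have D: "D \<ge> 0"
    using y[of undefined] by (meson less_le_trans zero_less_divide_1_iff less_imp_le)
  have pointwise: "norm ((1 / y i) *\<^sub>R w i - u) / sqrt (p i)
      \<le> D * (norm (a i) / sqrt (p i)) + (D * norm u) * (\<bar>y i - q i\<bar> / sqrt (p i))" for i
  proof -
    have "(1 / y i) *\<^sub>R w i - u = (1 / y i) *\<^sub>R (a i + (q i - y i) *\<^sub>R u)"
      using y(1)[of i] by (simp add: a_def kron_def algebra_simps)
    then have "norm ((1 / y i) *\<^sub>R w i - u) = (1 / y i) * norm (a i + (q i - y i) *\<^sub>R u)"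
      using y(1)[of i] by simp
    also have "\<dots> \<le> D * (norm (a i) + \<bar>y i - q i\<bar> * norm u)"
      using y(2)[of i] D norm_triangle_ineq[of "a i" "(q i - y i) *\<^sub>R u"]
      by (intro mult_mono) (auto simp: abs_minus_commute)
    finally have "norm ((1 / y i) *\<^sub>R w i - u) \<le> D * (norm (a i) + \<bar>y i - q i\<bar> * norm u)" .
    moreover have "sqrt (p i) > 0"
      using p by simp
    ultimately show ?thesis
      by (simp add: field_simps)
  qed
  have "pi_block_norm p (\<lambda>i. (1 / y i) *\<^sub>R w i - u)
      \<le> L2_set (\<lambda>i. D * (norm (a i) / sqrt (p i)) + (D * norm u) * (\<bar>y i - q i\<bar> / sqrt (p i))) UNIV"
    unfolding pi_block_norm_eq_L2_set[OF p]
    by (rule L2_set_mono) (use pointwise p in \<open>auto simp: less_imp_le\<close>)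
  also have "\<dots> \<le> L2_set (\<lambda>i. D * (norm (a i) / sqrt (p i))) UNIV
      + L2_set (\<lambda>i. (D * norm u) * (\<bar>y i - q i\<bar> / sqrt (p i))) UNIV"
    by (rule L2_set_triangle_ineq)
  also have "\<dots> = D * pi_block_norm p a + D * pi_norm p (\<lambda>i. y i - q i) * norm u"
    using D by (simp add: L2_set_right_distrib pi_block_norm_eq_L2_set[OF p]
        pi_norm_eq_L2_set[OF p] algebra_simps)
  finally show ?thesis by (simp add: a_def)
qed

theorem lemma5p1:
  fixes E :: "('n::finite \<times> 'n) set"
    and p :: "'n \<Rightarrow> real"
    and f :: "'n \<Rightarrow> real^'d \<Rightarrow> real"
    and gF :: "'n \<Rightarrow> real^'d \<Rightarrow> real^'d"
    and Lf :: "'n \<Rightarrow> real"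
    and \<beta> \<alpha> :: real
    and wstar :: "real^'d"
    and w0 :: "'n \<Rightarrow> real^'d"
    and t :: nat
  assumes self_loops: "\<forall>i. (i, i) \<in> E"
    and strongly_connected: "\<forall>i j. (i, j) \<in> E\<^sup>*"
    and stationary: "mat_vec (Wmat E) p = p"
    and p_pos: "\<forall>i. p i > 0"
    and p_sum: "(\<Sum>i\<in>UNIV. p i) = 1"
    and grad: "\<forall>i x. (f i has_derivative (\<lambda>h. gF i x \<bullet> h)) (at x)"
    and F1: "\<forall>i. (Lf i)-lipschitz_on UNIV (gF i)"
    and F2: "\<beta> > 0" "strongly_convex \<beta> (\<lambda>x. (1 / real CARD('n)) * (\<Sum>i\<in>UNIV. f i x))"
    and wstar_min: "\<forall>x. (1 / real CARD('n)) * (\<Sum>i\<in>UNIV. f i wstar)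
                        \<le> (1 / real CARD('n)) * (\<Sum>i\<in>UNIV. f i x)"
    and alpha_pos: "\<alpha> > 0"
  shows "pi_block_norm p (\<lambda>i. zseq (Wmat E) gF \<alpha> w0 t i - wbar (Wmat E) gF \<alpha> w0 t)
     \<le> delta (Wmat E) * pi_block_norm p (\<lambda>i. wseq (Wmat E) gF \<alpha> w0 t i
                 - kron (\<lambda>j. real CARD('n) * p j) (wbar (Wmat E) gF \<alpha> w0 t) i)
       + delta (Wmat E) * pi_norm p (\<lambda>i. 1 - real CARD('n) * p i) * sigmaW E p ^ t
         * (norm (wbar (Wmat E) gF \<alpha> w0 t - wstar) + norm wstar)"
proof -
  let ?W = "Wmat E" and ?n = "real CARD('n)"
  let ?y = "yseq ?W t" and ?wb = "wbar ?W gF \<alpha> w0 t"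
  have W_nonneg: "\<forall>i j. ?W i j \<ge> 0"
    by (simp add: Wmat_nonneg)
  have W_column: "\<forall>j. (\<Sum>i\<in>UNIV. ?W i j) = 1"
    using self_loops by (simp add: sum_Wmat_column)
  have p_le_1: "\<forall>i. p i \<le> 1"
    using p_pos p_sum member_le_sum[of _ UNIV p] by (metis finite less_imp_le UNIV_I)
  have delta: "\<And>i. 1 / ?y i \<le> delta ?W"
    using inverse_yseq_le_delta[OF W_nonneg stationary p_pos p_le_1] .
  have y_pos: "\<And>i. ?y i > 0"
    using yseq_ge_stationary[OF W_nonneg stationary p_le_1] p_pos by (meson less_le_trans)
  have delta_nonneg: "delta ?W \<ge> 0"
    using delta[of undefined] y_pos[of undefined] by (meson less_imp_le less_le_trans zero_less_divide_1_iff)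
  have mixing: "pi_norm p (\<lambda>i. ?y i - ?n * p i) \<le> sigmaW E p ^ t * pi_norm p (\<lambda>i. 1 - ?n * p i)"
    unfolding sigmaW_def by (rule pi_norm_yseq_minus_stationary_le[OF W_column stationary p_sum p_pos])
  have "norm ?wb \<le> norm (?wb - wstar) + norm wstar"
    by (metis norm_triangle_sub add.commute)
  then have "delta ?W * pi_norm p (\<lambda>i. ?y i - ?n * p i) * norm ?wb
      \<le> delta ?W * (sigmaW E p ^ t * pi_norm p (\<lambda>i. 1 - ?n * p i)) * (norm (?wb - wstar) + norm wstar)"
    using mixing delta_nonneg pi_norm_nonneg[OF p_pos] pi_opnorm_nonneg[OF p_pos]
    by (intro mult_mono mult_left_mono) (auto simp: sigmaW_def)
  moreover have "pi_block_norm p (\<lambda>i. zseq ?W gF \<alpha> w0 t i - ?wb)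
      \<le> delta ?W * pi_block_norm p (\<lambda>i. wseq ?W gF \<alpha> w0 t i - kron (\<lambda>j. ?n * p j) ?wb i)
        + delta ?W * pi_norm p (\<lambda>i. ?y i - ?n * p i) * norm ?wb"
    unfolding zseq_def by (rule pi_block_norm_rescale_le[OF p_pos y_pos delta])
  ultimately show ?thesis
    by (simp add: mult_ac)
qed

end
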